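(* Assume that the presentation $\mathcal{P}^{[2]}_r(e,b)$ is consistent and that the test equations \begin{align*} c(a_k c(a_j a_i)) &= c(c(a_k a_j) a_i) & (w(a_k)+w(a_j)+w(a_i) \leq d),\\ c(r_j c(a_j a_i)) &= c( c(r_j a_j) a_i) & (r_j < \infty,\ w(a_j)+w(a_i) \leq d),\\ c(r_i c(a_j a_i )) &= c( a_j c( r_i a_i)) & (r_i < \infty,\ w(a_j)+w(a_i) \leq d) \end{align*} hold. Then $\tau_L$ and $\tau_R$ induce $R$-linear maps $\varphi_L, \varphi_R \colon A^{[2]} \rightarrow A^{[2]}$.
   Context: Let $R$ be a field or the ring of integers; all algebras are associative. $\mathcal{P}_r(e,b)$ is a nilpotent presentation on generators $a_1,\ldots,a_n$ with $r_1,\ldots,r_n \in \mathbb N \cup \{\infty\}$ and $e_{i,k}, b_{i,j,k} \in R$ (with $0 \leq e_{i,k}, b_{i,j,k} < r_k$ whenever $r_k<\infty$) and relations $r_i a_i = e_{i,i+1} a_{i+1} + \ldots + e_{i,n} a_n$ (for $r_i<\infty$) and $a_j a_i = b_{i,j,\ell+1} a_{\ell+1} + \ldots + b_{i,j,n} a_n$ with $\ell = \max\{i,j\}$ (for $1\le i,j\le n$). For $1 \le k \le n$, $\mathcal{P}^{[k]}_r(e,b)$ is the presentation on $a_k,\ldots,a_n$ whose relations are those relations of $\mathcal{P}_r(e,b)$ involving only these generators; $A^{[k]}$ is the algebra it defines and $F_k$ is the free associative algebra on $a_k,\ldots,a_n$. A presentation is consistent if each element of the defined algebra is represented by a unique reduced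 form $x_1a_1+\ldots+x_na_n$ ($0\le x_i<r_i$ if $r_i<\infty$). $c$ denotes the function on the free algebra induced by the collection algorithm, mapping an element to one of its reduced forms. $w$ is a weight function: $w(a_i)\in\mathbb N$ minimal subject to $w(a_k)\ge w(a_i)$ whenever $e_{i,k}\neq0$ and $w(a_k)\ge w(a_i)+w(a_j)$ whenever $b_{i,j,k}\ne 0$; $d=\max\{w(a_1),\ldots,w(a_n)\}$. The maps $\tau_L,\tau_R\colon F_2\to F_2$ are defined by $\tau_L(a_j)=\sum_{k=1}^n b_{j,1,k}a_k$ with $\tau_L(vw)=\tau_L(v)w$ for all $v,w\in F_2$, and $\tau_R(a_j)=\sum_{k=1}^n b_{1,j,k}a_k$ with $\tau_R(vw)=v\tau_R(w)$ for all $v,w\in F_2$ (i.e. left resp. right multiplication by $a_1$ expressed via the relations). *)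

theory Defs
  imports Main "HOL-Library.Extended_Nat" "HOL-Library.Function_Algebras"
begin

text \<open>Elements of the free (non-unital) associative R-algebra on generators a_1..a_n are
  represented as coefficient functions on words (lists of generator indices).
  The word [j, i] stands for the monomial a_j a_i.\<close>

type_synonym 'a falg = "nat list \<Rightarrow> 'a"

definition mon :: "nat list \<Rightarrow> 'a::zero_neq_one falg" where
  "mon w = (\<lambda>v. if v = w then 1 else 0)"

definition fmul :: "'a::comm_ring_1 falg \<Rightarrow> 'a falg \<Rightarrow> 'a falg" where
  "fmul f g = (\<lambda>w. \<Sum>i\<le>length w. f (take i w) * g (drop i w))"

definition fscale :: "'a::comm_ring_1 \<Rightarrow> 'a falg \<Rightarrow> 'a falg" where
  "fscale c f = (\<lambda>w. c * f w)"

definition free_alg :: "nat \<Rightarrow> nat \<Rightarrow> 'a::zero falg set" where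
  "free_alg n k = {f. finite {w. f w \<noteq> 0} \<and>
                      (\<forall>w. f w \<noteq> 0 \<longrightarrow> w \<noteq> [] \<and> set w \<subseteq> {k..n})}"

definition lin :: "nat \<Rightarrow> (nat \<Rightarrow> 'a::comm_ring_1) \<Rightarrow> 'a falg" where
  "lin n x = (\<lambda>w. \<Sum>t\<in>{1..n}. x t * mon [t] w)"

definition pres_rels :: "nat \<Rightarrow> (nat \<Rightarrow> enat) \<Rightarrow> (nat \<Rightarrow> nat \<Rightarrow> 'a::comm_ring_1)
    \<Rightarrow> (nat \<Rightarrow> nat \<Rightarrow> nat \<Rightarrow> 'a) \<Rightarrow> nat \<Rightarrow> 'a falg set" where
  "pres_rels n r e b k =
     {fscale (of_nat (the_enat (r i))) (mon [i]) - (\<lambda>w. \<Sum>t\<in>{i+1..n}. e i t * mon [t] w)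
        | i. i \<in> {k..n} \<and> r i \<noteq> \<infinity>}
   \<union> {mon [j, i] - (\<lambda>w. \<Sum>t\<in>{max i j + 1..n}. b i j t * mon [t] w)
        | i j. i \<in> {k..n} \<and> j \<in> {k..n}}"

inductive_set ideal_gen :: "nat \<Rightarrow> nat \<Rightarrow> 'a::comm_ring_1 falg set \<Rightarrow> 'a falg set"
  for n k G where
  gen: "g \<in> G \<Longrightarrow> g \<in> ideal_gen n k G"
| zero: "0 \<in> ideal_gen n k G"
| add: "x \<in> ideal_gen n k G \<Longrightarrow> y \<in> ideal_gen n k G \<Longrightarrow> x + y \<in> ideal_gen n k G"
| scale: "x \<in> ideal_gen n k G \<Longrightarrow> fscale c x \<in> ideal_gen n k G"
| lmul: "x \<in> ideal_gen n k G \<Longrightarrow> u \<noteq> [] \<Longrightarrow> set u \<subseteq> {k..n}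
          \<Longrightarrow> fmul (mon u) x \<in> ideal_gen n k G"
| rmul: "x \<in> ideal_gen n k G \<Longrightarrow> u \<noteq> [] \<Longrightarrow> set u \<subseteq> {k..n}
          \<Longrightarrow> fmul x (mon u) \<in> ideal_gen n k G"

text \<open>Kernel of F_k \<rightarrow> A^[k].\<close>
definition rel_ideal :: "nat \<Rightarrow> (nat \<Rightarrow> enat) \<Rightarrow> (nat \<Rightarrow> nat \<Rightarrow> 'a::comm_ring_1)
    \<Rightarrow> (nat \<Rightarrow> nat \<Rightarrow> nat \<Rightarrow> 'a) \<Rightarrow> nat \<Rightarrow> 'a falg set" where
  "rel_ideal n r e b k = ideal_gen n k (pres_rels n r e b k)"

text \<open>rng x m: the coefficient x lies in the admissible range for modulus m (for R = Z: 0 \<le> x < m).\<close>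
definition int_rng :: "int \<Rightarrow> nat \<Rightarrow> bool" where
  "int_rng x m \<longleftrightarrow> 0 \<le> x \<and> x < int m"

definition reduced :: "('a::zero \<Rightarrow> nat \<Rightarrow> bool) \<Rightarrow> nat \<Rightarrow> (nat \<Rightarrow> enat) \<Rightarrow> nat
    \<Rightarrow> (nat \<Rightarrow> 'a) \<Rightarrow> bool" where
  "reduced rng n r k x \<longleftrightarrow> (\<forall>t. t \<notin> {k..n} \<longrightarrow> x t = 0) \<and>
      (\<forall>t\<in>{k..n}. r t \<noteq> \<infinity> \<longrightarrow> rng (x t) (the_enat (r t)))"

definition consistent :: "('a::comm_ring_1 \<Rightarrow> nat \<Rightarrow> bool) \<Rightarrow> nat \<Rightarrow> (nat \<Rightarrow> enat)
    \<Rightarrow> (nat \<Rightarrow> nat \<Rightarrow> 'a) \<Rightarrow> (nat \<Rightarrow> nat \<Rightarrow> nat \<Rightarrow> 'a) \<Rightarrow> nat \<Rightarrow> bool" where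
  "consistent rng n r e b k \<longleftrightarrow>
     (\<forall>f\<in>free_alg n k. \<exists>x. reduced rng n r k x \<and> f - lin n x \<in> rel_ideal n r e b k) \<and>
     (\<forall>x y. reduced rng n r k x \<longrightarrow> reduced rng n r k y \<longrightarrow>
            lin n x - lin n y \<in> rel_ideal n r e b k \<longrightarrow> x = y)"

text \<open>Well-formedness of the data of a nilpotent presentation P_r(e,b); coefficients not
  occurring in any relation are taken to be 0.\<close>
definition nil_pres :: "('a::comm_ring_1 \<Rightarrow> nat \<Rightarrow> bool) \<Rightarrow> nat \<Rightarrow> (nat \<Rightarrow> enat)
    \<Rightarrow> (nat \<Rightarrow> nat \<Rightarrow> 'a) \<Rightarrow> (nat \<Rightarrow> nat \<Rightarrow> nat \<Rightarrow> 'a) \<Rightarrow> bool" where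
  "nil_pres rng n r e b \<longleftrightarrow>
     (\<forall>i\<in>{1..n}. r i \<noteq> 0) \<and>
     (\<forall>i k. e i k \<noteq> 0 \<longrightarrow> i \<in> {1..n} \<and> r i \<noteq> \<infinity> \<and> i < k \<and> k \<le> n) \<and>
     (\<forall>i k. i \<in> {1..n} \<longrightarrow> k \<in> {1..n} \<longrightarrow> r i \<noteq> \<infinity> \<longrightarrow> r k \<noteq> \<infinity>
            \<longrightarrow> rng (e i k) (the_enat (r k))) \<and>
     (\<forall>i j k. b i j k \<noteq> 0 \<longrightarrow> i \<in> {1..n} \<and> j \<in> {1..n} \<and> max i j < k \<and> k \<le> n) \<and>
     (\<forall>i j k. i \<in> {1..n} \<longrightarrow> j \<in> {1..n} \<longrightarrow> k \<in> {1..n} \<longrightarrow> r k \<noteq> \<infinity>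
            \<longrightarrow> rng (b i j k) (the_enat (r k)))"

definition weight_ok :: "nat \<Rightarrow> (nat \<Rightarrow> nat \<Rightarrow> 'a::zero) \<Rightarrow> (nat \<Rightarrow> nat \<Rightarrow> nat \<Rightarrow> 'a)
    \<Rightarrow> (nat \<Rightarrow> nat) \<Rightarrow> bool" where
  "weight_ok n e b w \<longleftrightarrow> (\<forall>i\<in>{1..n}. 1 \<le> w i) \<and>
     (\<forall>i\<in>{1..n}. \<forall>k\<in>{1..n}. e i k \<noteq> 0 \<longrightarrow> w i \<le> w k) \<and>
     (\<forall>i\<in>{1..n}. \<forall>j\<in>{1..n}. \<forall>k\<in>{1..n}. b i j k \<noteq> 0 \<longrightarrow> w i + w j \<le> w k)"

definition wt :: "nat \<Rightarrow> (nat \<Rightarrow> nat \<Rightarrow> 'a::zero) \<Rightarrow> (nat \<Rightarrow> nat \<Rightarrow> nat \<Rightarrow> 'a) \<Rightarrow> nat \<Rightarrow> nat" where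
  "wt n e b i = (LEAST m. \<exists>w. weight_ok n e b w \<and> w i = m)"

definition dmax :: "nat \<Rightarrow> (nat \<Rightarrow> nat \<Rightarrow> 'a::zero) \<Rightarrow> (nat \<Rightarrow> nat \<Rightarrow> nat \<Rightarrow> 'a) \<Rightarrow> nat" where
  "dmax n e b = Max (wt n e b ` {1..n})"

text \<open>Collection of a linear combination of generators (coefficient vector), using the
  power relations from a_1 upwards; dv/md are quotient and remainder in R.\<close>
definition col_step :: "('a::comm_ring_1 \<Rightarrow> 'a \<Rightarrow> 'a) \<Rightarrow> ('a \<Rightarrow> 'a \<Rightarrow> 'a) \<Rightarrow> (nat \<Rightarrow> enat)
    \<Rightarrow> (nat \<Rightarrow> nat \<Rightarrow> 'a) \<Rightarrow> nat \<Rightarrow> (nat \<Rightarrow> 'a) \<Rightarrow> (nat \<Rightarrow> 'a)" where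
  "col_step dv md r e t v =
     (if r t = \<infinity> then v
      else (let m = of_nat (the_enat (r t)); q = dv (v t) m; s = md (v t) m
            in (\<lambda>u. if u = t then s else v u + q * e t u)))"

definition collect :: "('a::comm_ring_1 \<Rightarrow> 'a \<Rightarrow> 'a) \<Rightarrow> ('a \<Rightarrow> 'a \<Rightarrow> 'a) \<Rightarrow> nat
    \<Rightarrow> (nat \<Rightarrow> enat) \<Rightarrow> (nat \<Rightarrow> nat \<Rightarrow> 'a) \<Rightarrow> (nat \<Rightarrow> 'a) \<Rightarrow> (nat \<Rightarrow> 'a)" where
  "collect dv md n r e v = fold (col_step dv md r e) [1..<n+1] v"

definition unitv :: "nat \<Rightarrow> nat \<Rightarrow> 'a::zero_neq_one" where
  "unitv i = (\<lambda>t. if t = i then 1 else 0)"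

text \<open>pvec b j i: the right-hand side of the relation for a_j a_i.\<close>
definition pvec :: "(nat \<Rightarrow> nat \<Rightarrow> nat \<Rightarrow> 'a) \<Rightarrow> nat \<Rightarrow> nat \<Rightarrow> nat \<Rightarrow> 'a" where
  "pvec b j i = (\<lambda>t. b i j t)"

text \<open>a_k * (sum v_m a_m), rewritten by the product relations.\<close>
definition lmulv :: "nat \<Rightarrow> (nat \<Rightarrow> nat \<Rightarrow> nat \<Rightarrow> 'a::comm_ring_1) \<Rightarrow> nat \<Rightarrow> (nat \<Rightarrow> 'a)
    \<Rightarrow> (nat \<Rightarrow> 'a)" where
  "lmulv n b k v = (\<lambda>t. \<Sum>m\<in>{1..n}. v m * b m k t)"

text \<open>(sum v_m a_m) * a_i, rewritten by the product relations.\<close>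
definition rmulv :: "nat \<Rightarrow> (nat \<Rightarrow> nat \<Rightarrow> nat \<Rightarrow> 'a::comm_ring_1) \<Rightarrow> (nat \<Rightarrow> 'a) \<Rightarrow> nat
    \<Rightarrow> (nat \<Rightarrow> 'a)" where
  "rmulv n b v i = (\<lambda>t. \<Sum>m\<in>{1..n}. v m * b i m t)"

definition svec :: "'a::comm_ring_1 \<Rightarrow> (nat \<Rightarrow> 'a) \<Rightarrow> (nat \<Rightarrow> 'a)" where
  "svec c v = (\<lambda>t. c * v t)"

definition test_equations :: "('a::comm_ring_1 \<Rightarrow> 'a \<Rightarrow> 'a) \<Rightarrow> ('a \<Rightarrow> 'a \<Rightarrow> 'a) \<Rightarrow> nat
    \<Rightarrow> (nat \<Rightarrow> enat) \<Rightarrow> (nat \<Rightarrow> nat \<Rightarrow> 'a) \<Rightarrow> (nat \<Rightarrow> nat \<Rightarrow> nat \<Rightarrow> 'a) \<Rightarrow> bool" where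
  "test_equations dv md n r e b \<longleftrightarrow>
     (let c = collect dv md n r e; w = wt n e b; d = dmax n e b;
          rr = (\<lambda>i. of_nat (the_enat (r i))) in
      (\<forall>i\<in>{1..n}. \<forall>j\<in>{1..n}. \<forall>k\<in>{1..n}. w k + w j + w i \<le> d \<longrightarrow>
          c (lmulv n b k (c (pvec b j i))) = c (rmulv n b (c (pvec b k j)) i)) \<and>
      (\<forall>i\<in>{1..n}. \<forall>j\<in>{1..n}. r j \<noteq> \<infinity> \<longrightarrow> w j + w i \<le> d \<longrightarrow>
          c (svec (rr j) (c (pvec b j i))) = c (rmulv n b (c (svec (rr j) (unitv j))) i)) \<and>
      (\<forall>i\<in>{1..n}. \<forall>j\<in>{1..n}. r i \<noteq> \<infinity> \<longrightarrow> w j + w i \<le> d \<longrightarrow>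
          c (svec (rr i) (c (pvec b j i))) = c (lmulv n b j (c (svec (rr i) (unitv i))))))"

text \<open>tau_L: a_j w maps to (a_1 a_j expressed via the relations) w; tau_R: w a_j maps to
  w (a_j a_1 expressed via the relations); both extended R-linearly.\<close>
definition tau_L :: "nat \<Rightarrow> (nat \<Rightarrow> nat \<Rightarrow> nat \<Rightarrow> 'a::comm_ring_1) \<Rightarrow> 'a falg \<Rightarrow> 'a falg" where
  "tau_L n b f = (\<lambda>u. case u of [] \<Rightarrow> 0 | t # u' \<Rightarrow> \<Sum>m\<in>{1..n}. f (m # u') * b m 1 t)"

definition tau_R :: "nat \<Rightarrow> (nat \<Rightarrow> nat \<Rightarrow> nat \<Rightarrow> 'a::comm_ring_1) \<Rightarrow> 'a falg \<Rightarrow> 'a falg" where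
  "tau_R n b f = (\<lambda>u. if u = [] then 0
                       else \<Sum>m\<in>{1..n}. f (butlast u @ [m]) * b 1 m (last u))"

definition induces_linear_map :: "'a::comm_ring_1 falg set \<Rightarrow> 'a falg set
    \<Rightarrow> ('a falg \<Rightarrow> 'a falg) \<Rightarrow> bool" where
  "induces_linear_map F I \<tau> \<longleftrightarrow> \<tau> ` F \<subseteq> F \<and>
     (\<forall>f\<in>F. \<forall>g\<in>F. \<forall>x y. \<tau> (fscale x f + fscale y g) = fscale x (\<tau> f) + fscale y (\<tau> g)) \<and>
     (\<forall>f\<in>F. \<forall>g\<in>F. f - g \<in> I \<longrightarrow> \<tau> f - \<tau> g \<in> I)"

end

theory Submission
  imports Defs
begin

text \<open>
  tau_L is left multiplication by a_1, rewritten with the product relations. It is R-linear and maps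
  F_2 into F_2, as a_1 a_j only involves generators a_k with k > 1; the point is that it maps the
  relation ideal I of P^[2] into itself. As tau_L commutes with right multiplication and sends
  a_t u x to a combination of the a_s u x, only the generators of I need to be checked. The product
  relation a_j a_i - (sum_k b_ijk a_k) goes to (a_1 a_j) a_i - a_1 (sum_k b_ijk a_k), the power
  relation r_t a_t - (sum_k e_tk a_k) to r_t (a_1 a_t) - a_1 (sum_k e_tk a_k). Collection only
  subtracts multiples of power relations, so modulo I these are differences of collected forms that
  the first resp. third test equation (with k = 1 resp. j = 1) declare equal. Beyond weight d no
  test equation is needed: there the structure constants involved vanish. Collecting r_t a_t only
  uses the power relations of a_(t+1), ..., a_n, whence a downward induction on t.

  Word reversal maps I onto the relation ideal of the opposite presentation (b_ijk replaced by
  b_jik), whose test equations are those of P with the second and third kind exchanged, and it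
  conjugates tau_R into tau_L of the opposite presentation.
\<close>

lemma fmul_mon_left:
  "fmul (mon u) g w = (if take (length u) w = u then g (drop (length u) w) else 0)"
proof -
  have "fmul (mon u) g w =
      (\<Sum>i\<le>length w. if i = length u then (if take i w = u then g (drop i w) else 0) else 0)"
    unfolding fmul_def mon_def by (intro sum.cong refl) (auto simp: min_def split: if_splits)
  also have "\<dots> = (if take (length u) w = u then g (drop (length u) w) else 0)"
    by (auto simp: min_def dest: arg_cong[where f = length])
  finally show ?thesis .
qed

lemma fmul_mon_right:
  "fmul g (mon u) w =
     (if length u \<le> length w \<and> drop (length w - length u) w = u
      then g (take (length w - length u) w) else 0)"
proof -
  have "fmul g (mon u) w =
      (\<Sum>i\<le>length w. if i = length w - length u
         then (if length u \<le> length w \<and> drop i w = u then g (take i w) else 0) else 0)"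
    unfolding fmul_def mon_def by (intro sum.cong refl) auto
  then show ?thesis
    by simp
qed

lemma fmul_mon_Cons_Cons: "fmul (mon (t # u)) x (m # w) = (if m = t then fmul (mon u) x w else 0)"
  by (simp add: fmul_mon_left)

lemma fscale_zero: "fscale c 0 = 0"
  by (simp add: fscale_def fun_eq_iff)

lemma lin_add: "lin n (v + u) = lin n v + lin n u"
  by (auto simp: lin_def fun_eq_iff algebra_simps sum.distrib)

lemma lin_diff: "lin n (v - u) = lin n v - lin n u"
  by (auto simp: lin_def fun_eq_iff algebra_simps sum_subtractf)

lemma lin_svec: "lin n (svec c v) = fscale c (lin n v)"
  by (auto simp: lin_def svec_def fscale_def fun_eq_iff sum_distrib_left mult.assoc)

lemma lin_zero: "lin n 0 = 0"
  by (auto simp: lin_def fun_eq_iff)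

lemma lin_singleton: "lin n v [t] = (if t \<in> {1..n} then v t else 0)"
proof -
  have "lin n v [t] = (\<Sum>u\<in>{1..n}. if u = t then v u else 0)"
    unfolding lin_def mon_def by (intro sum.cong) auto
  then show ?thesis by simp
qed

lemma lin_not_singleton: "length w \<noteq> 1 \<Longrightarrow> lin n v w = 0"
  by (auto simp: lin_def mon_def intro!: sum.neutral)

lemma lmulv_diff: "lmulv n b k (v - u) = lmulv n b k v - lmulv n b k u"
  by (auto simp: lmulv_def fun_eq_iff algebra_simps sum_subtractf)

lemma rmulv_diff: "rmulv n b (v - u) i = rmulv n b v i - rmulv n b u i"
  by (auto simp: rmulv_def fun_eq_iff algebra_simps sum_subtractf)

lemma tau_L_add: "tau_L n b (f + g) = tau_L n b f + tau_L n b g"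
  by (auto simp: tau_L_def fun_eq_iff algebra_simps sum.distrib split: list.split)

lemma tau_L_diff: "tau_L n b (f - g) = tau_L n b f - tau_L n b g"
  by (auto simp: tau_L_def fun_eq_iff algebra_simps sum_subtractf split: list.split)

lemma tau_L_fscale: "tau_L n b (fscale c f) = fscale c (tau_L n b f)"
  by (auto simp: tau_L_def fscale_def fun_eq_iff sum_distrib_left mult.assoc split: list.split)

lemma tau_L_zero: "tau_L n b 0 = 0"
  by (auto simp: tau_L_def fun_eq_iff split: list.split)

lemma tau_R_add: "tau_R n b (f + g) = tau_R n b f + tau_R n b g"
  by (auto simp: tau_R_def fun_eq_iff algebra_simps sum.distrib)

lemma tau_R_diff: "tau_R n b (f - g) = tau_R n b f - tau_R n b g"
  by (auto simp: tau_R_def fun_eq_iff algebra_simps sum_subtractf)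

lemma tau_R_fscale: "tau_R n b (fscale c f) = fscale c (tau_R n b f)"
  by (auto simp: tau_R_def fscale_def fun_eq_iff sum_distrib_left mult.assoc)

lemma ideal_gen_diff:
  assumes "x \<in> ideal_gen n k G" and "y \<in> ideal_gen n k G"
  shows "x - y \<in> ideal_gen n k G"
proof -
  have "x + fscale (-1) y \<in> ideal_gen n k G"
    using assms by (intro ideal_gen.add ideal_gen.scale)
  moreover have "x + fscale (-1) y = x - y"
    by (simp add: fscale_def fun_eq_iff)
  ultimately show ?thesis by simp
qed

lemma ideal_gen_sum:
  "finite S \<Longrightarrow> (\<And>t. t \<in> S \<Longrightarrow> f t \<in> ideal_gen n k G) \<Longrightarrow> (\<lambda>w. \<Sum>t\<in>S. f t w) \<in> ideal_gen n k G"
proof (induction S rule: finite_induct)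
  case empty
  then show ?case using ideal_gen.zero by (simp add: zero_fun_def)
next
  case (insert x F)
  have "(\<lambda>w. \<Sum>t\<in>insert x F. f t w) = f x + (\<lambda>w. \<Sum>t\<in>F. f t w)"
    using insert by (auto simp: fun_eq_iff)
  then show ?case using insert by (auto intro: ideal_gen.add)
qed

lemma ideal_gen_Nil: "x \<in> ideal_gen n k G \<Longrightarrow> (\<And>g. g \<in> G \<Longrightarrow> g [] = 0) \<Longrightarrow> x [] = 0"
  by (induction x rule: ideal_gen.induct) (auto simp: fscale_def fmul_def mon_def)

lemma rel_ideal_Nil: "x \<in> rel_ideal n r e b k \<Longrightarrow> x [] = 0"
  unfolding rel_ideal_def by (erule ideal_gen_Nil) (auto simp: pres_rels_def fscale_def mon_def)

section \<open>Word reversal and the opposite presentation\<close>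

definition rev_falg :: "'a falg \<Rightarrow> 'a falg" where
  "rev_falg f = (\<lambda>w. f (rev w))"

lemma rev_falg_fmul: "rev_falg (fmul f g) = fmul (rev_falg g) (rev_falg f)"
proof (rule ext)
  fix w :: "nat list"
  have "rev_falg (fmul f g) w =
      (\<Sum>i\<le>length w. f (rev (drop (length w - i) w)) * g (rev (take (length w - i) w)))"
    by (simp add: rev_falg_def fmul_def take_rev drop_rev)
  also have "\<dots> = (\<Sum>j\<le>length w. f (rev (drop j w)) * g (rev (take j w)))"
    by (rule sum.reindex_bij_witness[where i = "\<lambda>i. length w - i" and j = "\<lambda>i. length w - i"]) auto
  also have "\<dots> = fmul (rev_falg g) (rev_falg f) w"
    by (simp add: fmul_def rev_falg_def mult.commute)
  finally show "rev_falg (fmul f g) w = fmul (rev_falg g) (rev_falg f) w" .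
qed

lemma rev_falg_mon: "rev_falg (mon u) = mon (rev u)"
  by (auto simp: rev_falg_def mon_def fun_eq_iff)

lemma rev_falg_add: "rev_falg (f + g) = rev_falg f + rev_falg g"
  by (simp add: rev_falg_def fun_eq_iff)

lemma rev_falg_fscale: "rev_falg (fscale c f) = fscale c (rev_falg f)"
  by (simp add: rev_falg_def fscale_def)

lemma rev_falg_zero: "rev_falg 0 = 0"
  by (simp add: rev_falg_def fun_eq_iff)

lemma rev_falg_free_alg:
  assumes f: "f \<in> free_alg n k"
  shows "rev_falg f \<in> free_alg n k"
proof -
  have "{w. rev_falg f w \<noteq> 0} = rev ` {w. f w \<noteq> 0}"
    by (auto simp: rev_falg_def image_iff) (metis rev_rev_ident)
  moreover have "w \<noteq> [] \<and> set w \<subseteq> {k..n}" if "rev_falg f w \<noteq> 0" for w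
  proof -
    from f that have "rev w \<noteq> [] \<and> set (rev w) \<subseteq> {k..n}"
      unfolding free_alg_def rev_falg_def by blast
    then show ?thesis by simp
  qed
  ultimately show ?thesis
    using f by (simp add: free_alg_def)
qed

definition opp_coeffs :: "(nat \<Rightarrow> nat \<Rightarrow> nat \<Rightarrow> 'a) \<Rightarrow> nat \<Rightarrow> nat \<Rightarrow> nat \<Rightarrow> 'a" where
  "opp_coeffs b = (\<lambda>i j k. b j i k)"

lemma opp_coeffs_opp_coeffs [simp]: "opp_coeffs (opp_coeffs b) = b"
  by (simp add: opp_coeffs_def)

lemma pres_rels_rev:
  assumes "g \<in> pres_rels n r e b k"
  shows "rev_falg g \<in> pres_rels n r e (opp_coeffs b) k"
proof -
  from assms consider
      (pow) i where "i \<in> {k..n}" "r i \<noteq> \<infinity>"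
        "g = fscale (of_nat (the_enat (r i))) (mon [i]) - (\<lambda>w. \<Sum>t\<in>{i+1..n}. e i t * mon [t] w)"
    | (prod) i j where "i \<in> {k..n}" "j \<in> {k..n}"
        "g = mon [j, i] - (\<lambda>w. \<Sum>t\<in>{max i j + 1..n}. b i j t * mon [t] w)"
    unfolding pres_rels_def by blast
  then show ?thesis
  proof cases
    case pow
    then have "rev_falg g = g"
      by (auto simp: rev_falg_def fscale_def mon_def fun_eq_iff)
    with pow show ?thesis
      unfolding pres_rels_def by blast
  next
    case prod
    then have "rev_falg g = mon [i, j] - (\<lambda>w. \<Sum>t\<in>{max j i + 1..n}. opp_coeffs b j i t * mon [t] w)"
      by (auto simp: rev_falg_def mon_def fun_eq_iff opp_coeffs_def max.commute)
    with prod show ?thesis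
      unfolding pres_rels_def by blast
  qed
qed

lemma rel_ideal_rev: "x \<in> rel_ideal n r e b k \<Longrightarrow> rev_falg x \<in> rel_ideal n r e (opp_coeffs b) k"
  unfolding rel_ideal_def
proof (induction x rule: ideal_gen.induct)
  case (gen g)
  then show ?case by (intro ideal_gen.gen pres_rels_rev)
next
  case zero
  then show ?case by (simp only: rev_falg_zero ideal_gen.zero)
next
  case (add x y)
  then show ?case by (simp only: rev_falg_add ideal_gen.add)
next
  case (scale x c)
  then show ?case by (simp only: rev_falg_fscale ideal_gen.scale)
next
  case (lmul x u)
  then show ?case by (simp only: rev_falg_fmul rev_falg_mon) (intro ideal_gen.rmul; simp)
next
  case (rmul x u)
  then show ?case by (simp only: rev_falg_fmul rev_falg_mon) (intro ideal_gen.lmul; simp)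
qed

lemma tau_R_eq_rev_tau_L: "tau_R n b f = rev_falg (tau_L n (opp_coeffs b) (rev_falg f))"
proof (rule ext)
  fix u
  show "tau_R n b f u = rev_falg (tau_L n (opp_coeffs b) (rev_falg f)) u"
    by (cases u rule: rev_exhaust) (simp_all add: tau_R_def tau_L_def rev_falg_def opp_coeffs_def)
qed

lemma weight_ok_opp: "weight_ok n e (opp_coeffs b) w \<longleftrightarrow> weight_ok n e b w"
proof -
  have "w i + w j \<le> w k \<longleftrightarrow> w j + w i \<le> w k" for i j k
    by (simp add: add.commute)
  then show ?thesis
    unfolding weight_ok_def opp_coeffs_def by blast
qed

lemma test_equations_opp:
  assumes "test_equations dv md n r e b"
  shows "test_equations dv md n r e (opp_coeffs b)"
proof -
  have [simp]: "wt n e (opp_coeffs b) = wt n e b" "dmax n e (opp_coeffs b) = dmax n e b"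
    by (simp_all add: wt_def dmax_def weight_ok_opp fun_eq_iff)
  have [simp]: "lmulv n (opp_coeffs b) k v = rmulv n b v k" "rmulv n (opp_coeffs b) v i = lmulv n b i v"
    "pvec (opp_coeffs b) j i = pvec b i j" for k v i j
    by (simp_all add: lmulv_def rmulv_def pvec_def opp_coeffs_def)
  from assms show ?thesis
    unfolding test_equations_def Let_def by (simp add: ac_simps)
qed


section \<open>Presentations and collection\<close>

locale presentation =
  fixes n :: nat and r :: "nat \<Rightarrow> enat" and e :: "nat \<Rightarrow> nat \<Rightarrow> 'a::comm_ring_1"
    and b :: "nat \<Rightarrow> nat \<Rightarrow> nat \<Rightarrow> 'a" and dv md :: "'a \<Rightarrow> 'a \<Rightarrow> 'a"
  assumes e_supp: "e i k \<noteq> 0 \<Longrightarrow> 1 \<le> i \<and> i < k \<and> k \<le> n"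
    and b_supp: "b i j k \<noteq> 0 \<Longrightarrow> i \<in> {1..n} \<and> j \<in> {1..n} \<and> max i j < k \<and> k \<le> n"
    and div_mod: "x = dv x m * m + md x m"
      \<comment> \<open>dv, md: quotient and remainder\<close>
    and div_zero: "dv 0 m = 0"
    and div_self: "i \<in> {1..n} \<Longrightarrow> r i \<noteq> \<infinity>
                   \<Longrightarrow> dv (of_nat (the_enat (r i))) (of_nat (the_enat (r i))) = 1"
begin

abbreviation "\<I> \<equiv> rel_ideal n r e b 2"

abbreviation "col \<equiv> collect dv md n r e"

abbreviation "rr t \<equiv> (of_nat (the_enat (r t)) :: 'a)" \<comment> \<open>meaningless unless r t is finite\<close>

lemma rel_ideal_add: "x \<in> \<I> \<Longrightarrow> y \<in> \<I> \<Longrightarrow> x + y \<in> \<I>"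
  unfolding rel_ideal_def by (rule ideal_gen.add)

lemma rel_ideal_diff: "x \<in> \<I> \<Longrightarrow> y \<in> \<I> \<Longrightarrow> x - y \<in> \<I>"
  unfolding rel_ideal_def by (rule ideal_gen_diff)

lemma rel_ideal_fscale: "x \<in> \<I> \<Longrightarrow> fscale c x \<in> \<I>"
  unfolding rel_ideal_def by (rule ideal_gen.scale)

lemma rel_ideal_zero: "0 \<in> \<I>"
  unfolding rel_ideal_def by (rule ideal_gen.zero)

lemma rel_ideal_sum: "finite S \<Longrightarrow> (\<And>t. t \<in> S \<Longrightarrow> f t \<in> \<I>) \<Longrightarrow> (\<lambda>w. \<Sum>t\<in>S. f t w) \<in> \<I>"
  unfolding rel_ideal_def by (rule ideal_gen_sum)

lemma rel_ideal_rmul: "x \<in> \<I> \<Longrightarrow> u \<noteq> [] \<Longrightarrow> set u \<subseteq> {2..n} \<Longrightarrow> fmul x (mon u) \<in> \<I>"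
  unfolding rel_ideal_def by (rule ideal_gen.rmul)

lemma rel_ideal_gen: "g \<in> pres_rels n r e b 2 \<Longrightarrow> g \<in> \<I>"
  unfolding rel_ideal_def by (rule ideal_gen.gen)

definition cong_rel :: "'a falg \<Rightarrow> 'a falg \<Rightarrow> bool" (infix "\<approx>" 50) where
  "f \<approx> g \<longleftrightarrow> f - g \<in> \<I>"

lemma cong_rel_refl: "f \<approx> f"
  by (simp add: cong_rel_def rel_ideal_zero)

lemma cong_rel_sym: "f \<approx> g \<Longrightarrow> g \<approx> f"
  using rel_ideal_diff[OF rel_ideal_zero, of "f - g"] by (simp add: cong_rel_def)

lemma cong_rel_trans [trans]: "f \<approx> g \<Longrightarrow> g \<approx> h \<Longrightarrow> f \<approx> h"
  using rel_ideal_add[of "f - g" "g - h"] by (simp add: cong_rel_def)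

lemma eq_cong_rel_trans [trans]: "f = g \<Longrightarrow> g \<approx> h \<Longrightarrow> f \<approx> h"
  and cong_rel_eq_trans [trans]: "f \<approx> g \<Longrightarrow> g = h \<Longrightarrow> f \<approx> h"
  by simp_all

lemma cong_rel_add_ideal: "d \<in> \<I> \<Longrightarrow> f + d \<approx> f"
  by (simp add: cong_rel_def)

lemma cong_rel_diff_ideal: "d \<in> \<I> \<Longrightarrow> f - d \<approx> f"
  using rel_ideal_diff[OF rel_ideal_zero, of d] by (simp add: cong_rel_def)

lemma cong_rel_fscale: "f \<approx> g \<Longrightarrow> fscale c f \<approx> fscale c g"
  unfolding cong_rel_def using rel_ideal_fscale[of "f - g" c]
  by (simp add: fscale_def fun_diff_def right_diff_distrib)

lemma sum_e_restrict: "(\<Sum>u\<in>{1..n}. e t u * g u) = (\<Sum>u\<in>{t+1..n}. e t u * g u)"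
proof (rule sum.mono_neutral_right)
  show "\<forall>u\<in>{1..n} - {t+1..n}. e t u * g u = 0"
  proof
    fix u assume "u \<in> {1..n} - {t+1..n}"
    then have "e t u = 0" using e_supp[of t u] by (cases "e t u = 0") auto
    then show "e t u * g u = 0" by simp
  qed
qed auto

lemma sum_b_restrict: "(\<Sum>t\<in>{1..n}. b i j t * g t) = (\<Sum>t\<in>{max i j + 1..n}. b i j t * g t)"
proof (rule sum.mono_neutral_right)
  show "\<forall>t\<in>{1..n} - {max i j + 1..n}. b i j t * g t = 0"
  proof
    fix t assume "t \<in> {1..n} - {max i j + 1..n}"
    then have "b i j t = 0" using b_supp[of i j t] by (cases "b i j t = 0") auto
    then show "b i j t * g t = 0" by simp
  qed
qed auto

lemma b_at_1: "b i j 1 = 0"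
  using b_supp[of i j 1] by (cases "b i j 1 = 0") auto

definition pow_rel :: "nat \<Rightarrow> nat \<Rightarrow> 'a" where
  "pow_rel t = (\<lambda>u. (if u = t then rr t else 0) - e t u)"

lemma lin_pow_rel:
  assumes "t \<in> {1..n}"
  shows "lin n (pow_rel t) = fscale (rr t) (mon [t]) - (\<lambda>w. \<Sum>u\<in>{t+1..n}. e t u * mon [u] w)"
proof (rule ext)
  fix w
  have "lin n (pow_rel t) w =
      (\<Sum>u\<in>{1..n}. if u = t then rr t * mon [u] w else 0) - (\<Sum>u\<in>{1..n}. e t u * mon [u] w)"
    unfolding lin_def pow_rel_def sum_subtractf[symmetric]
    by (intro sum.cong) (auto simp: left_diff_distrib)
  also have "\<dots> = rr t * mon [t] w - (\<Sum>u\<in>{t+1..n}. e t u * mon [u] w)"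
    using assms unfolding sum_e_restrict by simp
  finally show "lin n (pow_rel t) w = (fscale (rr t) (mon [t]) - (\<lambda>w. \<Sum>u\<in>{t+1..n}. e t u * mon [u] w)) w"
    by (simp add: fscale_def)
qed

lemma lin_pvec: "lin n (pvec b j i) = (\<lambda>w. \<Sum>t\<in>{max i j + 1..n}. b i j t * mon [t] w)"
  unfolding lin_def pvec_def sum_b_restrict ..

lemma pow_rel_in_ideal: "t \<in> {2..n} \<Longrightarrow> r t \<noteq> \<infinity> \<Longrightarrow> lin n (pow_rel t) \<in> \<I>"
  by (rule rel_ideal_gen, unfold pres_rels_def, intro UnI1 CollectI exI[of _ t]) (simp add: lin_pow_rel)

lemma prod_rel_in_ideal: "i \<in> {2..n} \<Longrightarrow> j \<in> {2..n} \<Longrightarrow> mon [j, i] - lin n (pvec b j i) \<in> \<I>"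
  by (rule rel_ideal_gen, unfold pres_rels_def, intro UnI2 CollectI exI[of _ i] exI[of _ j]) (simp add: lin_pvec)

lemma pvec_at_1: "pvec b j i 1 = 0"
  unfolding pvec_def by (rule b_at_1)

lemma lmulv_at_1: "lmulv n b k v 1 = 0"
  unfolding lmulv_def b_at_1 by simp

lemma rmulv_at_1: "rmulv n b v i 1 = 0"
  unfolding rmulv_def b_at_1 by simp

inductive_set pow_span :: "nat \<Rightarrow> (nat \<Rightarrow> 'a) set" for s where
  zero: "0 \<in> pow_span s"
| gen: "t \<in> {s..n} \<Longrightarrow> r t \<noteq> \<infinity> \<Longrightarrow> svec q (pow_rel t) \<in> pow_span s"
| add: "p \<in> pow_span s \<Longrightarrow> p' \<in> pow_span s \<Longrightarrow> p + p' \<in> pow_span s"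

lemma pow_span_vanishes_below: "p \<in> pow_span s \<Longrightarrow> 1 \<le> u \<Longrightarrow> u < s \<Longrightarrow> p u = 0"
proof (induction p rule: pow_span.induct)
  case (gen t q)
  then have "e t u = 0" using e_supp[of t u] by (cases "e t u = 0") auto
  with gen show ?case by (auto simp: svec_def pow_rel_def)
qed simp_all

lemma lin_pow_span_in_ideal: "p \<in> pow_span s \<Longrightarrow> 2 \<le> s \<Longrightarrow> lin n p \<in> \<I>"
proof (induction p rule: pow_span.induct)
  case zero
  then show ?case by (simp only: lin_zero rel_ideal_zero)
next
  case (gen t q)
  then show ?case by (simp add: lin_svec rel_ideal_fscale pow_rel_in_ideal)
next
  case (add p p')
  then show ?case by (simp only: lin_add rel_ideal_add)
qed

lemma col_step_eq:
  assumes "r t \<noteq> \<infinity>"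
  shows "col_step dv md r e t v = v - svec (dv (v t) (rr t)) (pow_rel t)"
proof -
  have "e t t = 0" using e_supp[of t t] by auto
  moreover have "md (v t) (rr t) = v t - dv (v t) (rr t) * rr t"
    using div_mod[of "v t" "rr t"] by (simp add: algebra_simps)
  ultimately show ?thesis
    using assms by (auto simp: col_step_def Let_def svec_def pow_rel_def fun_eq_iff algebra_simps)
qed

lemma col_step_zero: "v t = 0 \<Longrightarrow> col_step dv md r e t v = v"
  using div_mod[of 0] div_zero by (simp add: col_step_def Let_def fun_eq_iff)

lemma fold_col_step_pow_span:
  assumes "set L \<subseteq> {1..n}" and "\<And>u. 1 \<le> u \<Longrightarrow> u < s \<Longrightarrow> v u = 0"
  shows "\<exists>p\<in>pow_span s. fold (col_step dv md r e) L v = v - p"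
  using assms
proof (induction L arbitrary: v)
  case Nil
  show ?case by (auto intro!: bexI[of _ 0] pow_span.zero)
next
  case (Cons t L)
  obtain q where q: "q \<in> pow_span s" and step: "col_step dv md r e t v = v - q"
  proof (cases "r t \<noteq> \<infinity> \<and> s \<le> t")
    case True
    with Cons.prems show ?thesis
      by (intro that[of "svec (dv (v t) (rr t)) (pow_rel t)"]) (auto simp: col_step_eq intro: pow_span.gen)
  next
    case False
    have "col_step dv md r e t v = v"
    proof (cases "r t = \<infinity>")
      case True
      then show ?thesis by (simp add: col_step_def)
    next
      case False
      with \<open>\<not> (r t \<noteq> \<infinity> \<and> s \<le> t)\<close> Cons.prems show ?thesis by (auto intro: col_step_zero)
    qed
    then show ?thesis using that[of 0] pow_span.zero by simp
  qed
  have "(v - q) u = 0" if "1 \<le> u" "u < s" for u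
    using Cons.prems(2) pow_span_vanishes_below[OF q] that by simp
  then obtain p where p: "p \<in> pow_span s" "fold (col_step dv md r e) L (v - q) = v - q - p"
    using Cons.IH[of "v - q"] Cons.prems(1) by (meson set_subset_Cons subset_trans)
  then show ?case
    using q step by (auto intro!: bexI[of _ "q + p"] pow_span.add simp: diff_diff_eq)
qed

lemma collect_eq_diff_pow_span:
  assumes "v 1 = 0"
  shows "\<exists>p\<in>pow_span 2. col v = v - p"
  unfolding collect_def
proof (rule fold_col_step_pow_span)
  show "v u = 0" if "1 \<le> u" "u < 2" for u
  proof -
    from that have "u = 1" by linarith
    with assms show ?thesis by simp
  qed
qed auto

lemma collect_at_1: "v 1 = 0 \<Longrightarrow> col v 1 = 0"
  using collect_eq_diff_pow_span pow_span_vanishes_below[of _ 2 1] by fastforce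

lemma collect_cong_rel: "v 1 = 0 \<Longrightarrow> lin n (col v) \<approx> lin n v"
  using collect_eq_diff_pow_span lin_pow_span_in_ideal
  by (fastforce simp: lin_diff intro: cong_rel_diff_ideal)

lemma collect_multiple_of_generator:
  assumes t: "t \<in> {2..n}" and rt: "r t \<noteq> \<infinity>"
  shows "\<exists>p\<in>pow_span (t + 1). col (svec (rr t) (unitv t)) = (\<lambda>u. e t u) - p"
proof -
  define u0 where "u0 = svec (rr t) (unitv t)"
  have upt_split: "[1..<n+1] = [1..<t] @ t # [t+1..<n+1]"
    using t upt_add_eq_append[of 1 t "n + 1 - t"] by (simp add: upt_conv_Cons)
  have "fold (col_step dv md r e) [1..<t] u0 = u0"
    by (rule fold_invariant[where Q = "\<lambda>t'. t' < t" and P = "\<lambda>v. v = u0"])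
      (auto simp: u0_def svec_def unitv_def col_step_zero)
  moreover have "col_step dv md r e t u0 = (\<lambda>u. e t u)"
    using t rt div_self[of t]
    by (auto simp: col_step_eq u0_def svec_def unitv_def pow_rel_def fun_eq_iff)
  moreover have "\<exists>p\<in>pow_span (t+1). fold (col_step dv md r e) [t+1..<n+1] (\<lambda>u. e t u) = (\<lambda>u. e t u) - p"
  proof (rule fold_col_step_pow_span)
    show "e t u = 0" if "1 \<le> u" "u < t + 1" for u
      using that e_supp[of t u] by (cases "e t u = 0") auto
  qed auto
  ultimately show ?thesis
    unfolding collect_def upt_split u0_def by simp
qed

lemma fmul_lin_mon: "fmul (lin n v) (mon [i]) w = (\<Sum>t\<in>{1..n}. v t * mon [t, i] w)"
  by (cases w rule: rev_exhaust) (simp_all add: fmul_mon_right lin_def, simp_all add: mon_def)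

lemma lin_rmulv: "lin n (rmulv n b v i) w = (\<Sum>t\<in>{1..n}. v t * lin n (pvec b t i) w)"
  unfolding lin_def rmulv_def pvec_def
  by (simp add: sum_distrib_left sum_distrib_right mult.assoc) (rule sum.swap)

lemma fmul_lin_mon_cong_rel:
  assumes i: "i \<in> {2..n}" and v: "v 1 = 0"
  shows "fmul (lin n v) (mon [i]) \<approx> lin n (rmulv n b v i)"
proof -
  have "fmul (lin n v) (mon [i]) - lin n (rmulv n b v i) =
      (\<lambda>w. \<Sum>t\<in>{1..n}. fscale (v t) (mon [t, i] - lin n (pvec b t i)) w)"
    by (simp add: fun_eq_iff fmul_lin_mon lin_rmulv fscale_def algebra_simps sum_subtractf)
  also have "\<dots> = (\<lambda>w. \<Sum>t\<in>{2..n}. fscale (v t) (mon [t, i] - lin n (pvec b t i)) w)"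
    using i v by (subst atLeastAtMost_insertL[of 1 n, symmetric]) (auto simp: fscale_def numeral_2_eq_2)
  also have "\<dots> \<in> \<I>"
    using i by (intro rel_ideal_sum rel_ideal_fscale prod_rel_in_ideal) auto
  finally show ?thesis
    unfolding cong_rel_def .
qed

lemma pow_span_rmulv_in_ideal:
  assumes p: "p \<in> pow_span 2" and i: "i \<in> {2..n}"
  shows "lin n (rmulv n b p i) \<in> \<I>"
proof -
  have "fmul (lin n p) (mon [i]) \<in> \<I>"
    using i by (intro rel_ideal_rmul lin_pow_span_in_ideal[OF p]) auto
  moreover have "fmul (lin n p) (mon [i]) \<approx> lin n (rmulv n b p i)"
    using i pow_span_vanishes_below[OF p] by (intro fmul_lin_mon_cong_rel) auto
  ultimately show ?thesis
    unfolding cong_rel_def using rel_ideal_diff by fastforce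
qed

abbreviation "W \<equiv> wt n e b"

abbreviation "D \<equiv> dmax n e b"

lemma weight_ok_pow2: "weight_ok n e b (\<lambda>i. 2 ^ i)"
  unfolding weight_ok_def
proof (intro conjI ballI impI)
  fix i k assume "e i k \<noteq> 0"
  then show "(2::nat) ^ i \<le> 2 ^ k" using e_supp[of i k] by (simp add: power_increasing)
next
  fix i j k assume "b i j k \<noteq> 0"
  then have "i \<le> k - 1" "j \<le> k - 1" "k = Suc (k - 1)" using b_supp[of i j k] by auto
  then have "(2::nat) ^ i + 2 ^ j \<le> 2 ^ (k - 1) + 2 ^ (k - 1)"
    by (intro add_mono power_increasing) auto
  also have "\<dots> = 2 ^ k"
    using \<open>k = Suc (k - 1)\<close> by (metis mult_2 power_Suc)
  finally show "(2::nat) ^ i + 2 ^ j \<le> 2 ^ k" .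
qed simp

lemma wt_witness: "\<exists>w. weight_ok n e b w \<and> w i = W i"
  unfolding wt_def by (rule LeastI_ex) (use weight_ok_pow2 in blast)

lemma wt_le: "weight_ok n e b w \<Longrightarrow> W i \<le> w i"
  unfolding wt_def by (rule Least_le) blast

lemma wt_mono: "e i k \<noteq> 0 \<Longrightarrow> W i \<le> W k"
proof -
  assume e: "e i k \<noteq> 0"
  obtain w where w: "weight_ok n e b w" "w k = W k" using wt_witness by blast
  have "i \<in> {1..n}" "k \<in> {1..n}" using e_supp[OF e] by auto
  with w(1) e have "w i \<le> w k" unfolding weight_ok_def by blast
  with wt_le[OF w(1), of i] w(2) show ?thesis by linarith
qed

lemma wt_add: "b i j k \<noteq> 0 \<Longrightarrow> W i + W j \<le> W k"
proof -
  assume b: "b i j k \<noteq> 0"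
  obtain w where w: "weight_ok n e b w" "w k = W k" using wt_witness by blast
  have "i \<in> {1..n}" "j \<in> {1..n}" "k \<in> {1..n}" using b_supp[OF b] by auto
  with w(1) b have "w i + w j \<le> w k" unfolding weight_ok_def by blast
  with wt_le[OF w(1), of i] wt_le[OF w(1), of j] w(2) show ?thesis by linarith
qed

lemma wt_le_dmax: "k \<in> {1..n} \<Longrightarrow> W k \<le> D"
  unfolding dmax_def by (rule Max_ge) auto

lemma b_eq_0_if_heavy: "D < W i + W j \<Longrightarrow> b i j k = 0"
  using wt_add[of i j k] wt_le_dmax[of k] b_supp[of i j k] by fastforce

lemma lmulv_eq_0_if_heavy:
  assumes "\<And>m. v m \<noteq> 0 \<Longrightarrow> D < W m + W k"
  shows "lmulv n b k v = 0"
proof -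
  have "v m * b m k t = 0" for m t
    using assms[of m] b_eq_0_if_heavy[of m k t] by (cases "v m = 0") auto
  then show ?thesis by (simp add: lmulv_def fun_eq_iff)
qed

lemma rmulv_eq_0_if_heavy:
  assumes "\<And>m. v m \<noteq> 0 \<Longrightarrow> D < W i + W m"
  shows "rmulv n b v i = 0"
proof -
  have "v m * b i m t = 0" for m t
    using assms[of m] b_eq_0_if_heavy[of i m t] by (cases "v m = 0") auto
  then show ?thesis by (simp add: rmulv_def fun_eq_iff)
qed

lemma pvec_heavy: "D < W k + W j \<Longrightarrow> pvec b k j = 0"
  by (simp add: pvec_def fun_eq_iff b_eq_0_if_heavy add.commute)

lemma lmulv_pow_rhs_heavy: "D < W k + W t \<Longrightarrow> lmulv n b k (\<lambda>u. e t u) = 0"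
  by (rule lmulv_eq_0_if_heavy) (use wt_mono[of t] in force)

lemma rmulv_pvec_heavy: "D < W k + W j + W i \<Longrightarrow> rmulv n b (pvec b k j) i = 0"
  by (rule rmulv_eq_0_if_heavy) (use wt_add[of j k] in \<open>force simp: pvec_def\<close>)

lemma lmulv_pvec_heavy: "D < W k + W j + W i \<Longrightarrow> lmulv n b k (pvec b j i) = 0"
  by (rule lmulv_eq_0_if_heavy) (use wt_add[of i j] in \<open>force simp: pvec_def\<close>)

subsection \<open>Left multiplication by a_1\<close>

lemma tau_L_lin: "tau_L n b (lin n v) = lin n (lmulv n b 1 v)"
proof (rule ext)
  fix w
  show "tau_L n b (lin n v) w = lin n (lmulv n b 1 v) w"
  proof (cases w)
    case Nil
    then show ?thesis by (simp add: tau_L_def lin_not_singleton)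
  next
    case (Cons a u)
    have "b m 1 a = 0" if "a \<notin> {1..n}" for m
      using b_supp[of m 1 a] that by (cases "b m 1 a = 0") auto
    with Cons show ?thesis
      by (cases u) (auto simp: tau_L_def lin_singleton lin_not_singleton lmulv_def)
  qed
qed

lemma tau_L_mon_pair:
  assumes j: "j \<in> {1..n}"
  shows "tau_L n b (mon [j, i]) = fmul (lin n (pvec b 1 j)) (mon [i])"
proof (rule ext)
  fix w
  show "tau_L n b (mon [j, i]) w = fmul (lin n (pvec b 1 j)) (mon [i]) w"
  proof (cases w)
    case Nil
    then show ?thesis by (simp add: tau_L_def fmul_lin_mon, simp add: mon_def)
  next
    case (Cons a u)
    have "tau_L n b (mon [j, i]) w = (\<Sum>m\<in>{1..n}. mon [j, i] (m # u) * b m 1 a)"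
      using Cons by (simp add: tau_L_def)
    also have "\<dots> = (\<Sum>m\<in>{1..n}. if m = j then (if u = [i] then b j 1 a else 0) else 0)"
      by (intro sum.cong) (auto simp: mon_def)
    also have "\<dots> = (\<Sum>t\<in>{1..n}. if t = a then (if u = [i] then b j 1 t else 0) else 0)"
      using j b_supp[of j 1 a] by (cases "b j 1 a = 0") auto
    also have "\<dots> = fmul (lin n (pvec b 1 j)) (mon [i]) w"
      unfolding fmul_lin_mon using Cons by (intro sum.cong) (auto simp: pvec_def mon_def)
    finally show ?thesis .
  qed
qed

lemma tau_L_fmul_mon_Cons:
  assumes t: "t \<in> {1..n}"
  shows "tau_L n b (fmul (mon (t # u)) x) = (\<lambda>w. \<Sum>s\<in>{2..n}. fscale (b t 1 s) (fmul (mon (s # u)) x) w)"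
proof (rule ext)
  fix w
  show "tau_L n b (fmul (mon (t # u)) x) w = (\<Sum>s\<in>{2..n}. fscale (b t 1 s) (fmul (mon (s # u)) x) w)"
  proof (cases w)
    case Nil
    then show ?thesis by (simp add: tau_L_def fmul_mon_left fscale_def)
  next
    case (Cons a w')
    have "tau_L n b (fmul (mon (t # u)) x) w =
        (\<Sum>m\<in>{1..n}. if m = t then fmul (mon u) x w' * b t 1 a else 0)"
      unfolding Cons tau_L_def list.case fmul_mon_Cons_Cons by (intro sum.cong) auto
    also have "\<dots> = (if a \<in> {2..n} then b t 1 a * fmul (mon u) x w' else 0)"
      using t b_supp[of t 1 a] by (cases "b t 1 a = 0") auto
    also have "\<dots> = (\<Sum>s\<in>{2..n}. if s = a then b t 1 a * fmul (mon u) x w' else 0)"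
      by simp
    also have "\<dots> = (\<Sum>s\<in>{2..n}. fscale (b t 1 s) (fmul (mon (s # u)) x) w)"
      using Cons by (intro sum.cong) (auto simp: fscale_def fmul_mon_Cons_Cons)
    finally show ?thesis .
  qed
qed

lemma tau_L_fmul_mon_right:
  assumes x: "x [] = 0" and u: "u \<noteq> []"
  shows "tau_L n b (fmul x (mon u)) = fmul (tau_L n b x) (mon u)"
proof (rule ext)
  fix w
  show "tau_L n b (fmul x (mon u)) w = fmul (tau_L n b x) (mon u) w"
  proof (cases w)
    case Nil
    then show ?thesis using u by (simp add: tau_L_def fmul_mon_right)
  next
    case (Cons a w')
    consider "length u = Suc (length w')" | "length u \<le> length w'" | "Suc (length w') < length u"
      by linarith
    then show ?thesis
    proof cases
      case 1
      with Cons x show ?thesis by (auto simp: tau_L_def fmul_mon_right intro!: sum.neutral)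
    next
      case 2
      then have "Suc (length w') - length u = Suc (length w' - length u)" by simp
      with 2 Cons show ?thesis
        by (simp add: tau_L_def fmul_mon_right sum_distrib_right[symmetric] cong: if_cong)
    next
      case 3
      then show ?thesis using Cons by (simp add: tau_L_def fmul_mon_right)
    qed
  qed
qed

lemma tau_L_nonzero:
  assumes "tau_L n b f w \<noteq> 0"
  obtains a m u where "w = a # u" "a \<in> {2..n}" "f (m # u) \<noteq> 0"
proof -
  from assms obtain a u where w: "w = a # u" by (cases w) (auto simp: tau_L_def)
  with assms obtain m where fb: "f (m # u) * b m 1 a \<noteq> 0"
    by (auto simp: tau_L_def elim: sum.not_neutral_contains_not_neutral)
  then have "a \<in> {2..n}" using b_supp[of m 1 a] by (cases "b m 1 a = 0") auto
  moreover from fb have "f (m # u) \<noteq> 0" by (metis mult_zero_left)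
  ultimately show ?thesis using that[OF w] by blast
qed

lemma tau_L_free_alg:
  assumes f: "f \<in> free_alg n 2"
  shows "tau_L n b f \<in> free_alg n 2"
proof -
  have "{w. tau_L n b f w \<noteq> 0} \<subseteq> (\<lambda>(a, u). a # u) ` ({2..n} \<times> tl ` {w. f w \<noteq> 0})"
  proof
    fix w assume "w \<in> {w. tau_L n b f w \<noteq> 0}"
    then obtain a m u where "w = a # u" "a \<in> {2..n}" "f (m # u) \<noteq> 0"
      by (auto elim: tau_L_nonzero)
    then show "w \<in> (\<lambda>(a, u). a # u) ` ({2..n} \<times> tl ` {w. f w \<noteq> 0})"
      by (auto intro!: image_eqI[of _ _ "(a, u)"] image_eqI[of _ tl "m # u"])
  qed
  moreover have "finite ((\<lambda>(a, u). a # u) ` ({2..n} \<times> tl ` {w. f w \<noteq> 0}))"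
    using f by (simp add: free_alg_def)
  moreover have "w \<noteq> [] \<and> set w \<subseteq> {2..n}" if nz: "tau_L n b f w \<noteq> 0" for w
  proof -
    obtain a m u where w: "w = a # u" "a \<in> {2..n}" and "f (m # u) \<noteq> 0"
      using tau_L_nonzero[OF nz] by blast
    with f have "set (m # u) \<subseteq> {2..n}" unfolding free_alg_def by blast
    with w show ?thesis by auto
  qed
  ultimately show ?thesis
    unfolding free_alg_def by (auto dest: finite_subset)
qed

lemma tau_L_pow_span:
  assumes "p \<in> pow_span s"
    and "\<And>t. t \<in> {s..n} \<Longrightarrow> r t \<noteq> \<infinity> \<Longrightarrow> tau_L n b (lin n (pow_rel t)) \<in> \<I>"
  shows "tau_L n b (lin n p) \<in> \<I>"
  using assms(1)
proof (induction p rule: pow_span.induct)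
  case zero
  then show ?case by (simp only: lin_zero tau_L_zero rel_ideal_zero)
next
  case (gen t q)
  then show ?case by (simp add: lin_svec tau_L_fscale rel_ideal_fscale assms(2))
next
  case (add p p')
  then show ?case by (simp only: lin_add tau_L_add rel_ideal_add)
qed


lemma tau_L_pow_rel:
  assumes "t \<in> {1..n}"
  shows "tau_L n b (lin n (pow_rel t)) = fscale (rr t) (lin n (pvec b 1 t)) - lin n (lmulv n b 1 (\<lambda>u. e t u))"
proof -
  have "pow_rel t = svec (rr t) (unitv t) - (\<lambda>u. e t u)"
    by (simp add: pow_rel_def svec_def unitv_def fun_eq_iff)
  moreover have "lmulv n b 1 (svec (rr t) (unitv t)) = svec (rr t) (pvec b 1 t)"
  proof (rule ext)
    fix s
    have "lmulv n b 1 (svec (rr t) (unitv t)) s = (\<Sum>m\<in>{1..n}. if m = t then rr t * b t 1 s else 0)"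
      unfolding lmulv_def svec_def unitv_def by (intro sum.cong) auto
    with assms show "lmulv n b 1 (svec (rr t) (unitv t)) s = svec (rr t) (pvec b 1 t) s"
      by (simp add: svec_def pvec_def)
  qed
  ultimately show ?thesis
    by (simp only: lin_diff tau_L_diff tau_L_lin) (simp only: lin_svec)
qed

lemma tau_L_prod_rel:
  "j \<in> {1..n} \<Longrightarrow>
    tau_L n b (mon [j, i] - lin n (pvec b j i)) = fmul (lin n (pvec b 1 j)) (mon [i]) - lin n (lmulv n b 1 (pvec b j i))"
  by (simp only: tau_L_diff tau_L_mon_pair tau_L_lin)

lemma lin_rmulv_collect_cong_rel:
  "i \<in> {2..n} \<Longrightarrow> v 1 = 0 \<Longrightarrow> lin n (rmulv n b (col v) i) \<approx> lin n (rmulv n b v i)"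
  using collect_eq_diff_pow_span pow_span_rmulv_in_ideal
  by (fastforce simp: rmulv_diff lin_diff intro: cong_rel_diff_ideal)

end

section \<open>The test equations\<close>

locale tested_presentation = presentation +
  assumes test_eqs: "test_equations dv md n r e b"
begin

lemma test_assoc:
  "i \<in> {1..n} \<Longrightarrow> j \<in> {1..n} \<Longrightarrow> k \<in> {1..n} \<Longrightarrow> W k + W j + W i \<le> D \<Longrightarrow>
    col (lmulv n b k (col (pvec b j i))) = col (rmulv n b (col (pvec b k j)) i)"
  using test_eqs unfolding test_equations_def Let_def by blast

lemma test_pow_right:
  "i \<in> {1..n} \<Longrightarrow> j \<in> {1..n} \<Longrightarrow> r i \<noteq> \<infinity> \<Longrightarrow> W j + W i \<le> D \<Longrightarrow>
    col (svec (rr i) (col (pvec b j i))) = col (lmulv n b j (col (svec (rr i) (unitv i))))"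
  using test_eqs unfolding test_equations_def Let_def by blast

lemma tau_L_pow_rel_in_ideal: "t \<in> {2..n} \<Longrightarrow> r t \<noteq> \<infinity> \<Longrightarrow> tau_L n b (lin n (pow_rel t)) \<in> \<I>"
proof (induction "n - t" arbitrary: t rule: less_induct)
  case less
  have t: "t \<in> {2..n}" and rt: "r t \<noteq> \<infinity>" by fact+
  define E where "E = (\<lambda>u. e t u)"
  have "fscale (rr t) (lin n (pvec b 1 t)) \<approx> lin n (lmulv n b 1 E)"
  proof (cases "W 1 + W t \<le> D")
    case True
    obtain p where p: "p \<in> pow_span (t + 1)" "col (svec (rr t) (unitv t)) = E - p"
      using collect_multiple_of_generator[OF t rt] unfolding E_def by blast
    have tau_p: "tau_L n b (lin n p) \<in> \<I>"
      using p(1) by (rule tau_L_pow_span) (use less t in auto)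
    have "fscale (rr t) (lin n (pvec b 1 t)) \<approx> fscale (rr t) (lin n (col (pvec b 1 t)))"
      by (rule cong_rel_fscale, rule cong_rel_sym, rule collect_cong_rel, rule pvec_at_1)
    also have "\<dots> = lin n (svec (rr t) (col (pvec b 1 t)))"
      by (simp only: lin_svec)
    also have "\<dots> \<approx> lin n (col (svec (rr t) (col (pvec b 1 t))))"
      by (rule cong_rel_sym, rule collect_cong_rel)
        (simp only: svec_def collect_at_1[of "pvec b 1 t", OF pvec_at_1] mult_zero_right)
    also have "\<dots> = lin n (col (lmulv n b 1 (col (svec (rr t) (unitv t)))))"
      using test_pow_right[of t 1] t rt True by (simp add: add.commute)
    also have "\<dots> \<approx> lin n (lmulv n b 1 (col (svec (rr t) (unitv t))))"
      by (rule collect_cong_rel, rule lmulv_at_1)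
    also have "\<dots> = lin n (lmulv n b 1 E) - tau_L n b (lin n p)"
      by (simp only: p(2) lmulv_diff lin_diff tau_L_lin)
    also have "\<dots> \<approx> lin n (lmulv n b 1 E)"
      using tau_p by (rule cong_rel_diff_ideal)
    finally show ?thesis .
  next
    case False
    then have "D < W 1 + W t" by simp
    then show ?thesis
      unfolding E_def by (simp add: pvec_heavy lmulv_pow_rhs_heavy lin_zero fscale_zero cong_rel_refl)
  qed
  with t show ?case
    unfolding E_def cong_rel_def by (simp add: tau_L_pow_rel)
qed

lemma tau_L_lin_pow_span_in_ideal: "p \<in> pow_span 2 \<Longrightarrow> tau_L n b (lin n p) \<in> \<I>"
  by (erule tau_L_pow_span) (auto intro: tau_L_pow_rel_in_ideal)

lemma lin_lmulv_collect_cong_rel: "v 1 = 0 \<Longrightarrow> lin n (lmulv n b 1 (col v)) \<approx> lin n (lmulv n b 1 v)"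
  using collect_eq_diff_pow_span tau_L_lin_pow_span_in_ideal
  by (fastforce simp: lmulv_diff lin_diff tau_L_lin intro: cong_rel_diff_ideal)

lemma tau_L_prod_rel_in_ideal:
  assumes i: "i \<in> {2..n}" and j: "j \<in> {2..n}"
  shows "tau_L n b (mon [j, i] - lin n (pvec b j i)) \<in> \<I>"
proof -
  have "fmul (lin n (pvec b 1 j)) (mon [i]) \<approx> lin n (rmulv n b (pvec b 1 j) i)"
    using i by (rule fmul_lin_mon_cong_rel) (rule pvec_at_1)
  also have "\<dots> \<approx> lin n (lmulv n b 1 (pvec b j i))"
  proof (cases "W 1 + W j + W i \<le> D")
    case True
    have "lin n (rmulv n b (pvec b 1 j) i) \<approx> lin n (rmulv n b (col (pvec b 1 j)) i)"
      by (rule cong_rel_sym, rule lin_rmulv_collect_cong_rel[OF i], rule pvec_at_1)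
    also have "\<dots> \<approx> lin n (col (rmulv n b (col (pvec b 1 j)) i))"
      by (rule cong_rel_sym, rule collect_cong_rel, rule rmulv_at_1)
    also have "\<dots> = lin n (col (lmulv n b 1 (col (pvec b j i))))"
      using test_assoc[of i j 1] i j True by simp
    also have "\<dots> \<approx> lin n (lmulv n b 1 (col (pvec b j i)))"
      by (rule collect_cong_rel, rule lmulv_at_1)
    also have "\<dots> \<approx> lin n (lmulv n b 1 (pvec b j i))"
      by (rule lin_lmulv_collect_cong_rel, rule pvec_at_1)
    finally show ?thesis .
  next
    case False
    then show ?thesis
      by (simp add: rmulv_pvec_heavy lmulv_pvec_heavy cong_rel_refl)
  qed
  finally show ?thesis
    using j unfolding cong_rel_def by (simp add: tau_L_prod_rel)
qed

lemma tau_L_rel_ideal: "x \<in> \<I> \<Longrightarrow> tau_L n b x \<in> \<I>"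
  unfolding rel_ideal_def
proof (induction x rule: ideal_gen.induct)
  case (gen g)
  then consider (pow) t where "t \<in> {2..n}" "r t \<noteq> \<infinity>" "g = lin n (pow_rel t)"
    | (prod) i j where "i \<in> {2..n}" "j \<in> {2..n}" "g = mon [j, i] - lin n (pvec b j i)"
    unfolding pres_rels_def by (auto simp: lin_pow_rel lin_pvec)
  then show ?case
    unfolding rel_ideal_def[symmetric]
    by cases (blast intro: tau_L_pow_rel_in_ideal tau_L_prod_rel_in_ideal)+
next
  case zero
  then show ?case by (simp only: tau_L_zero ideal_gen.zero)
next
  case (add x y)
  then show ?case by (simp only: tau_L_add ideal_gen.add)
next
  case (scale x c)
  then show ?case by (simp only: tau_L_fscale ideal_gen.scale)
next
  case (lmul x u)
  then obtain t u' where u: "u = t # u'" "t \<in> {2..n}" "set u' \<subseteq> {2..n}"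
    by (cases u) auto
  with lmul show ?case
    by (auto simp: tau_L_fmul_mon_Cons intro!: ideal_gen_sum ideal_gen.scale ideal_gen.lmul)
next
  case (rmul x u)
  then have "x [] = 0"
    using rel_ideal_Nil unfolding rel_ideal_def by blast
  with rmul show ?case
    by (simp add: tau_L_fmul_mon_right ideal_gen.rmul)
qed

end

lemma tested_presentation_opp:
  "tested_presentation n r e b dv md \<Longrightarrow> tested_presentation n r e (opp_coeffs b) dv md"
  unfolding tested_presentation_def tested_presentation_axioms_def presentation_def opp_coeffs_def
  by (auto simp: test_equations_opp[unfolded opp_coeffs_def] max.commute)

theorem tau_maps_induce_linear_maps:
  assumes "tested_presentation n r e b dv md"
  shows "induces_linear_map (free_alg n 2) (rel_ideal n r e b 2) (tau_L n b)"
    and "induces_linear_map (free_alg n 2) (rel_ideal n r e b 2) (tau_R n b)"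
proof -
  interpret L: tested_presentation n r e b dv md by fact
  interpret R: tested_presentation n r e "opp_coeffs b" dv md
    using assms by (rule tested_presentation_opp)
  show "induces_linear_map (free_alg n 2) (rel_ideal n r e b 2) (tau_L n b)"
    unfolding induces_linear_map_def
    by (auto simp: tau_L_add tau_L_fscale tau_L_diff[symmetric] L.tau_L_free_alg L.tau_L_rel_ideal)
  have "tau_R n b x \<in> rel_ideal n r e b 2" if "x \<in> rel_ideal n r e b 2" for x
  proof -
    have "rev_falg (tau_L n (opp_coeffs b) (rev_falg x)) \<in> rel_ideal n r e (opp_coeffs (opp_coeffs b)) 2"
      using that by (intro rel_ideal_rev R.tau_L_rel_ideal)
    then show ?thesis by (simp add: tau_R_eq_rev_tau_L)
  qed
  moreover have "tau_R n b f \<in> free_alg n 2" if "f \<in> free_alg n 2" for f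
    using that by (simp add: tau_R_eq_rev_tau_L rev_falg_free_alg R.tau_L_free_alg)
  ultimately show "induces_linear_map (free_alg n 2) (rel_ideal n r e b 2) (tau_R n b)"
    unfolding induces_linear_map_def by (auto simp: tau_R_add tau_R_fscale tau_R_diff[symmetric])
qed


lemma tested_presentation_int:
  fixes e :: "nat \<Rightarrow> nat \<Rightarrow> int"
  assumes "nil_pres int_rng n r e b" and "test_equations (div) (mod) n r e b"
  shows "tested_presentation n r e b (div) (mod)"
proof -
  have "int (the_enat (r i)) div int (the_enat (r i)) = 1" if "i \<in> {1..n}" "r i \<noteq> \<infinity>" for i
  proof -
    from assms(1) that have "r i \<noteq> 0" unfolding nil_pres_def by blast
    with that obtain m where "r i = enat m" "m \<noteq> 0"
      by (cases "r i") (auto simp: zero_enat_def)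
    then show ?thesis by simp
  qed
  with assms show ?thesis
    unfolding tested_presentation_def tested_presentation_axioms_def presentation_def nil_pres_def
    by auto
qed

lemma tested_presentation_field:
  fixes e :: "nat \<Rightarrow> nat \<Rightarrow> 'a::field"
  assumes "nil_pres (\<lambda>_ _. True) n (\<lambda>_. \<infinity>) e b"
    and "test_equations (\<lambda>_ _. 0) (\<lambda>x _. x) n (\<lambda>_. \<infinity>) e b"
  shows "tested_presentation n (\<lambda>_. \<infinity>) e b (\<lambda>_ _. 0) (\<lambda>x _. x)"
  using assms
  unfolding tested_presentation_def tested_presentation_axioms_def presentation_def nil_pres_def
  by auto

theorem lemma22:
  shows "(\<forall>n r (e :: nat \<Rightarrow> nat \<Rightarrow> int) b.
            nil_pres int_rng n r e b \<and> consistent int_rng n r e b 2 \<and>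
            test_equations (div) (mod) n r e b \<longrightarrow>
            induces_linear_map (free_alg n 2) (rel_ideal n r e b 2) (tau_L n b) \<and>
            induces_linear_map (free_alg n 2) (rel_ideal n r e b 2) (tau_R n b))
       \<and> (\<forall>n (e :: nat \<Rightarrow> nat \<Rightarrow> 'a::field) b.
            let r = (\<lambda>_. \<infinity>); rng = (\<lambda>_ _. True); dv = (\<lambda>_ _. 0); md = (\<lambda>x _. x) in
            nil_pres rng n r e b \<and> consistent rng n r e b 2 \<and>
            test_equations dv md n r e b \<longrightarrow>
            induces_linear_map (free_alg n 2) (rel_ideal n r e b 2) (tau_L n b) \<and>
            induces_linear_map (free_alg n 2) (rel_ideal n r e b 2) (tau_R n b))"
  unfolding Let_def
  using tau_maps_induce_linear_maps[OF tested_presentation_int]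
    tau_maps_induce_linear_maps[OF tested_presentation_field]
  by blast

end
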